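(* Let $\mathcal{D}\subseteq\{0,1\}^n$ be a nonempty down-monotone set and let $f:\{0,1\}^n\to\mathbb{R}$ be submodular on $\mathcal{D}$. If $f(0)>0$, then there are at least $\frac{1}{n+1}|\mathcal{D}|$ points $y\in\mathcal{D}$ with $f(y)\neq 0$.
   Context: $\mathcal{D}$ is down-monotone if $y\in\mathcal{D}$ and $x\le y$ (coordinatewise) imply $x\in\mathcal{D}$. $f$ is submodular on $\mathcal{D}$ (has non-increasing marginals on $\mathcal{D}$) if $f(x+\mathbf{e}_i)-f(x)\ge f(y+\mathbf{e}_i)-f(y)$ for all $i$ and all $x\le y$ with $x_i=y_i=0$ and $x+\mathbf{e}_i, y+\mathbf{e}_i\in\mathcal{D}$, where $\mathbf{e}_i$ is the $i$-th standard basis vector. *)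

theory Defs
  imports Complex_Main
begin

text \<open>Points of {0,1}^n are represented as functions x :: nat => nat with
  x i in {0,1} for i < n and x i = 0 for i >= n. The coordinatewise order is
  the pointwise order on functions.\<close>

definition cube :: "nat \<Rightarrow> (nat \<Rightarrow> nat) set" where
  "cube n = {x. (\<forall>i<n. x i \<in> {0, 1}) \<and> (\<forall>i\<ge>n. x i = 0)}"

definition unit_vec :: "nat \<Rightarrow> nat \<Rightarrow> nat" ("\<e>") where
  "unit_vec i = (\<lambda>j. if j = i then 1 else 0)"

definition add_unit :: "(nat \<Rightarrow> nat) \<Rightarrow> nat \<Rightarrow> (nat \<Rightarrow> nat)" where
  "add_unit x i = (\<lambda>j. x j + \<e> i j)"

definition down_monotone :: "(nat \<Rightarrow> nat) set \<Rightarrow> bool" where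
  "down_monotone D \<longleftrightarrow> (\<forall>x y. y \<in> D \<and> x \<le> y \<longrightarrow> x \<in> D)"

definition submodular_on ::
  "nat \<Rightarrow> (nat \<Rightarrow> nat) set \<Rightarrow> ((nat \<Rightarrow> nat) \<Rightarrow> real) \<Rightarrow> bool" where
  "submodular_on n D f \<longleftrightarrow>
     (\<forall>i<n. \<forall>x y. x \<le> y \<and> x i = 0 \<and> y i = 0 \<and> add_unit x i \<in> D \<and> add_unit y i \<in> D \<longrightarrow>
        f (add_unit x i) - f x \<ge> f (add_unit y i) - f y)"

end

theory Submission
  imports Defs
begin

text \<open>Submodularity gives f(y) - f(0) \<ge> \<Sum>i (f(y) - f(y - e_i)), the sum over the support of y.
  So if f(0) > 0, every zero y of f in D has a lower neighbour y - e_i (again in D) where f does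
  not vanish. Hence D is covered by the set N of non-zeros of f together with the n translates
  N + e_i, and |D| \<le> (n + 1) |N|.\<close>

definition char_vec :: "nat set \<Rightarrow> nat \<Rightarrow> nat" where
  "char_vec S = (\<lambda>j. if j \<in> S then 1 else 0)"

lemma cube_eq_char_vec_support:
  assumes "x \<in> cube n"
  shows "x = char_vec {j. x j = 1}" and "{j. x j = 1} \<subseteq> {..<n}"
  using assms unfolding cube_def char_vec_def
  by (auto simp: fun_eq_iff) (metis leI Zero_not_Suc)+

lemma cube_eq_image_char_vec: "cube n = char_vec ` Pow {..<n}"
proof
  show "cube n \<subseteq> char_vec ` Pow {..<n}"
  proof
    fix x assume "x \<in> cube n"
    then show "x \<in> char_vec ` Pow {..<n}"
      using cube_eq_char_vec_support[of x n] by (intro image_eqI[where x = "{j. x j = 1}"]) auto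
  qed
  show "char_vec ` Pow {..<n} \<subseteq> cube n"
    unfolding cube_def char_vec_def by auto
qed

lemma finite_cube: "finite (cube n)"
  by (simp add: cube_eq_image_char_vec)

lemma add_unit_char_vec: "i \<notin> T \<Longrightarrow> add_unit (char_vec T) i = char_vec (insert i T)"
  unfolding add_unit_def char_vec_def unit_vec_def by (auto simp: fun_eq_iff)

lemma add_unit_fun_upd_zero: "y i = 1 \<Longrightarrow> add_unit (y(i := 0)) i = y"
  unfolding add_unit_def unit_vec_def by (auto simp: fun_eq_iff)

lemma submodular_on_sum_marginals_le:
  assumes D: "D \<subseteq> cube n" and dm: "down_monotone D" and sm: "submodular_on n D f"
    and yD: "y \<in> D"
  shows "(\<Sum>i\<in>{j. y j = 1}. f y - f (y(i := 0))) \<le> f y - f (\<lambda>_. 0)"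
proof -
  define S where "S = {j. y j = 1}"
  have y_eq: "y = char_vec S" and Sn: "S \<subseteq> {..<n}"
    using cube_eq_char_vec_support[of y n] yD D unfolding S_def by auto
  have "(\<Sum>i\<in>T. f y - f (y(i := 0))) \<le> f (char_vec T) - f (\<lambda>_. 0)"
    if "finite T" "T \<subseteq> S" for T
    using that
  proof (induction T rule: finite_induct)
    case empty
    then show ?case by (simp add: char_vec_def)
  next
    case (insert i T)
    have iS: "i \<in> S" and TS: "T \<subseteq> S" using insert.prems by auto
    have "char_vec (insert i T) \<le> y"
      using insert.prems unfolding y_eq char_vec_def le_fun_def by auto
    then have "char_vec (insert i T) \<in> D"
      using dm yD unfolding down_monotone_def by blast
    then have "add_unit (char_vec T) i \<in> D"
      using insert.hyps(2) by (simp add: add_unit_char_vec)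
    moreover have yi: "y i = 1" using iS unfolding S_def by simp
    moreover have "add_unit (y(i := 0)) i \<in> D" using yD yi by (simp add: add_unit_fun_upd_zero)
    moreover have "char_vec T \<le> y(i := 0)"
      using TS insert.hyps(2) unfolding y_eq char_vec_def le_fun_def by auto
    moreover have "i < n" using iS Sn by auto
    moreover have "char_vec T i = 0" using insert.hyps(2) by (simp add: char_vec_def)
    ultimately have "f (add_unit (y(i := 0)) i) - f (y(i := 0))
        \<le> f (add_unit (char_vec T) i) - f (char_vec T)"
      using sm unfolding submodular_on_def by simp
    then have "f y - f (y(i := 0)) \<le> f (char_vec (insert i T)) - f (char_vec T)"
      using yi insert.hyps(2) by (simp add: add_unit_char_vec add_unit_fun_upd_zero)
    moreover have "(\<Sum>i\<in>T. f y - f (y(i := 0))) \<le> f (char_vec T) - f (\<lambda>_. 0)"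
      using insert.IH TS .
    ultimately show ?case unfolding sum.insert[OF insert.hyps] by linarith
  qed
  from this[of S] show ?thesis
    using Sn finite_subset y_eq unfolding S_def by auto
qed

lemma zero_has_nonzero_lower_neighbour:
  assumes D: "D \<subseteq> cube n" and dm: "down_monotone D" and sm: "submodular_on n D f"
    and f0: "f (\<lambda>_. 0) > 0" and yD: "y \<in> D" and fy: "f y = 0"
  obtains i where "i < n" "y i = 1" "y(i := 0) \<in> D" "f (y(i := 0)) \<noteq> 0"
proof -
  have "\<exists>i. y i = 1 \<and> f (y(i := 0)) \<noteq> 0"
  proof (rule ccontr)
    assume "\<not> ?thesis"
    then have "(\<Sum>i\<in>{j. y j = 1}. f y - f (y(i := 0))) = 0"
      using fy by simp
    then show False
      using submodular_on_sum_marginals_le[OF D dm sm yD] f0 fy by simp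
  qed
  then obtain i where yi: "y i = 1" and fi: "f (y(i := 0)) \<noteq> 0" by blast
  have "y(i := 0) \<le> y" by (simp add: le_fun_def)
  with dm yD have "y(i := 0) \<in> D" unfolding down_monotone_def by blast
  moreover have "i < n" using yi yD D unfolding cube_def by (cases "i < n") auto
  ultimately show thesis using that yi fi by blast
qed

lemma card_le_Suc_mult_card_if_covered:
  assumes "finite N" and "D \<subseteq> N \<union> (\<lambda>(x, i). g x i) ` (N \<times> {..<n})"
  shows "card D \<le> (n + 1) * card N"
proof -
  have "card D \<le> card (N \<union> (\<lambda>(x, i). g x i) ` (N \<times> {..<n}))"
    using assms by (intro card_mono) auto
  also have "\<dots> \<le> card N + card ((\<lambda>(x, i). g x i) ` (N \<times> {..<n}))"
    by (rule card_Un_le)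
  also have "\<dots> \<le> card N + card (N \<times> {..<n})"
    using card_image_le[of "N \<times> {..<n}" "\<lambda>(x, i). g x i"] assms(1) by simp
  also have "\<dots> = (n + 1) * card N" by (simp add: card_cartesian_product)
  finally show ?thesis .
qed

theorem lemma8:
  fixes n :: nat and D :: "(nat \<Rightarrow> nat) set" and f :: "(nat \<Rightarrow> nat) \<Rightarrow> real"
  assumes "D \<subseteq> cube n"
    and "D \<noteq> {}"
    and "down_monotone D"
    and "submodular_on n D f"
    and "f (\<lambda>_. 0) > 0"
  shows "real (card {y \<in> D. f y \<noteq> 0}) \<ge> real (card D) / real (n + 1)"
proof -
  define N where "N = {y \<in> D. f y \<noteq> 0}"
  have "finite D" using assms(1) finite_cube finite_subset by blast
  then have "finite N" unfolding N_def by simp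
  moreover have "D \<subseteq> N \<union> (\<lambda>(x, i). add_unit x i) ` (N \<times> {..<n})"
  proof
    fix y assume yD: "y \<in> D"
    show "y \<in> N \<union> (\<lambda>(x, i). add_unit x i) ` (N \<times> {..<n})"
    proof (cases "f y = 0")
      case True
      with zero_has_nonzero_lower_neighbour[OF assms(1,3,4,5) yD]
      obtain i where "i < n" "y i = 1" "y(i := 0) \<in> N"
        unfolding N_def by blast
      then have "y \<in> (\<lambda>(x, i). add_unit x i) ` (N \<times> {..<n})"
        by (intro image_eqI[where x = "(y(i := 0), i)"]) (simp_all add: add_unit_fun_upd_zero)
      then show ?thesis by blast
    qed (use yD N_def in auto)
  qed
  ultimately have "card D \<le> (n + 1) * card N"
    by (rule card_le_Suc_mult_card_if_covered)
  then have "real (card D) \<le> real (card N) * real (n + 1)"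
    by (metis mult.commute of_nat_le_iff of_nat_mult)
  then show ?thesis unfolding N_def by (simp add: divide_le_eq)
qed

end
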